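(* Let $H$ be a Hilbert space and $U_{ik}\in B(H)$, $i,k=1,\dots,n$, operators satisfying relations (R1)–(R5). Let $P_{ik}=U_{ik}^*U_{ik}$ and, for $\sigma\in S_n$, $P_\sigma=P_{1,\sigma^{-1}(1)}P_{2,\sigma^{-1}(2)}\cdots P_{n,\sigma^{-1}(n)}$. Then the projections $P_\sigma$, $\sigma\in S_n$, are central in the C*-algebra generated by $\{U_{ik}\}$ and form a resolution of the identity: $\sum_{\sigma\in S_n}P_\sigma=1$.
   Context: $n\ge2$, $\theta\in M_n(\mathbb R)$ skew-symmetric, $\omega_{ij}=e^{2\pi i\theta_{ij}}$. Relations, for all $i,j,k,l\in\{1,\dots,n\}$: (R1) $U_{ik}U_{jl}+\omega_{ji}U_{jk}U_{il}=\omega_{kl}U_{il}U_{jk}+\omega_{ji}\omega_{kl}U_{jl}U_{ik}$; (R2) $\sum_iU_{ik}U_{il}^*=\delta_{kl}1$; (R3) $\sum_iU_{il}^*U_{ik}=\delta_{kl}1$; (R4) $U_{jk}U_{ik}^*=0$ for $i\neq j$; (R5) $U_{ik}^*U_{jk}=0$ for $i\neq j$. *)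

theory Defs
  imports "HOL-Analysis.Analysis" "HOL-Combinatorics.Permutations"
begin

text \<open>Abstract unital C*-algebra: a real Banach algebra 'a with a central element iu
  (the imaginary unit, iu*iu = -1) giving the complex scalar action, and an involution st.\<close>

definition scC :: "'a::real_normed_algebra_1 \<Rightarrow> complex \<Rightarrow> 'a \<Rightarrow> 'a" where
  "scC iu c x = Re c *\<^sub>R x + Im c *\<^sub>R (iu * x)"

definition unital_cstar_algebra :: "('a::{real_normed_algebra_1,banach} \<Rightarrow> 'a) \<Rightarrow> 'a \<Rightarrow> bool" where
  "unital_cstar_algebra st iu \<longleftrightarrow>
     iu * iu = -1 \<and> (\<forall>x. iu * x = x * iu) \<and>
     (\<forall>c x. norm (scC iu c x) = cmod c * norm x) \<and>
     (\<forall>x. st (st x) = x) \<and> (\<forall>x y. st (x + y) = st x + st y) \<and>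
     (\<forall>x y. st (x * y) = st y * st x) \<and>
     (\<forall>c x. st (scC iu c x) = scC iu (cnj c) (st x)) \<and>
     (\<forall>x. norm (st x * x) = (norm x)^2)"

definition cstar_subalgebra :: "('a::{real_normed_algebra_1,banach} \<Rightarrow> 'a) \<Rightarrow> 'a \<Rightarrow> 'a set \<Rightarrow> bool" where
  "cstar_subalgebra st iu A \<longleftrightarrow> closed A \<and> 0 \<in> A \<and>
     (\<forall>x\<in>A. \<forall>y\<in>A. x + y \<in> A \<and> x * y \<in> A) \<and>
     (\<forall>x\<in>A. st x \<in> A \<and> (\<forall>c. scC iu c x \<in> A))"

definition cstar_generated :: "('a::{real_normed_algebra_1,banach} \<Rightarrow> 'a) \<Rightarrow> 'a \<Rightarrow> 'a set \<Rightarrow> 'a set" where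
  "cstar_generated st iu S = \<Inter>{A. cstar_subalgebra st iu A \<and> S \<subseteq> A}"

definition is_projection :: "('a::ring_1 \<Rightarrow> 'a) \<Rightarrow> 'a \<Rightarrow> bool" where
  "is_projection st p \<longleftrightarrow> st p = p \<and> p * p = p"

definition central_in :: "'a::ring_1 \<Rightarrow> 'a set \<Rightarrow> bool" where
  "central_in p A \<longleftrightarrow> p \<in> A \<and> (\<forall>a\<in>A. p * a = a * p)"

definition omega :: "(nat \<Rightarrow> nat \<Rightarrow> real) \<Rightarrow> nat \<Rightarrow> nat \<Rightarrow> complex" where
  "omega \<theta> i j = exp (2 * complex_of_real pi * \<i> * complex_of_real (\<theta> i j))"

definition Pop :: "('a::ring_1 \<Rightarrow> 'a) \<Rightarrow> (nat \<Rightarrow> nat \<Rightarrow> 'a) \<Rightarrow> nat \<Rightarrow> nat \<Rightarrow> 'a" where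
  "Pop st U i k = st (U i k) * U i k"

definition Psigma :: "('a::ring_1 \<Rightarrow> 'a) \<Rightarrow> (nat \<Rightarrow> nat \<Rightarrow> 'a) \<Rightarrow> nat \<Rightarrow> (nat \<Rightarrow> nat) \<Rightarrow> 'a" where
  "Psigma st U n \<sigma> = prod_list (map (\<lambda>i. Pop st U i (inv \<sigma> i)) [1..<n+1])"

end

theory Submission
  imports Defs
begin

text \<open>The relations make every U(i,k) a partial isometry whose source and range projections
  coincide: P(i,k) = U(i,k)* U(i,k) = U(i,k) U(i,k)*. The P(i,k) are orthogonal along rows and along
  columns; the columns sum to 1 by (R3), and a norm estimate shows that then the rows sum to 1 as
  well. For i = j, (R1) says that U(i,k) and U(i,l) commute up to a phase, whence P(i,k) U(i,l) = 0
  for k \<noteq> l; for i \<noteq> j and k \<noteq> l, multiplying (R1) by P(i,k) gives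
  P(i,k) U(j,l) P(i,k) = P(i,k) U(j,l), and inserting the k-th column sum gives
  U(j,l) P(i,k) = P(i,k) U(j,l) P(i,k). So every P(i,k), and every product of them, commutes with
  the generators and hence with the generated C*-algebra. Finally, expanding the product of the row
  sums, 1 = (\<Sum>k. P(1,k)) \<cdots> (\<Sum>k. P(n,k)) is the sum over all maps g of P(1,g 1) \<cdots> P(n,g n),
  and the terms with non-injective g vanish by column orthogonality.\<close>

lemma sum_eq_single:
  assumes "finite A" "a \<in> A" "\<And>x. x \<in> A \<Longrightarrow> x \<noteq> a \<Longrightarrow> f x = 0"
  shows "sum f A = f a"
  using sum.mono_neutral_left[of A "{a}" f] assms by auto

lemma cstar_generated_least:
  "cstar_subalgebra st iu A \<Longrightarrow> S \<subseteq> A \<Longrightarrow> cstar_generated st iu S \<subseteq> A"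
  unfolding cstar_generated_def by blast

lemma cstar_generated_superset: "S \<subseteq> cstar_generated st iu S"
  unfolding cstar_generated_def by blast

lemma cstar_generated_mult:
  "x \<in> cstar_generated st iu S \<Longrightarrow> y \<in> cstar_generated st iu S \<Longrightarrow> x * y \<in> cstar_generated st iu S"
  unfolding cstar_generated_def cstar_subalgebra_def by blast

lemma cstar_generated_st:
  "x \<in> cstar_generated st iu S \<Longrightarrow> st x \<in> cstar_generated st iu S"
  unfolding cstar_generated_def cstar_subalgebra_def by blast

lemma prod_list_commute:
  fixes x :: "'a::monoid_mult"
  shows "(\<And>y. y \<in> set xs \<Longrightarrow> x * y = y * x) \<Longrightarrow> x * prod_list xs = prod_list xs * x"
proof (induction xs)
  case (Cons y ys)
  then have "x * y = y * x" "x * prod_list ys = prod_list ys * x"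
    by simp_all
  then show ?case
    by (simp flip: mult.assoc) (simp add: mult.assoc)
qed simp

lemma prod_list_absorb:
  fixes xs :: "'a::monoid_mult list"
  assumes "\<And>x y. x \<in> set xs \<Longrightarrow> y \<in> set xs \<Longrightarrow> x * y = y * x"
    and "\<And>x. x \<in> set xs \<Longrightarrow> x * x = x"
    and "a \<in> set xs"
  shows "a * prod_list xs = prod_list xs"
  using assms
proof (induction xs)
  case (Cons y ys)
  show ?case
  proof (cases "a = y")
    case True
    then show ?thesis
      using Cons.prems(2) by (simp flip: mult.assoc)
  next
    case False
    then have "a * prod_list ys = prod_list ys" and "a * y = y * a"
      using Cons by simp_all
    then show ?thesis
      by (simp flip: mult.assoc) (simp add: mult.assoc)
  qed
qed simp

lemma prod_list_mult_absorbed: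
  fixes xs :: "'a::monoid_mult list"
  shows "(\<And>x. x \<in> set xs \<Longrightarrow> x * z = z) \<Longrightarrow> prod_list xs * z = z"
  by (induction xs) (simp_all add: mult.assoc)

lemma prod_list_idem:
  fixes xs :: "'a::monoid_mult list"
  assumes "\<And>x y. x \<in> set xs \<Longrightarrow> y \<in> set xs \<Longrightarrow> x * y = y * x"
    and "\<And>x. x \<in> set xs \<Longrightarrow> x * x = x"
  shows "prod_list xs * prod_list xs = prod_list xs"
  using assms by (intro prod_list_mult_absorbed prod_list_absorb)

lemma prod_list_eq_0:
  fixes xs :: "'a::ring_1 list"
  assumes "\<And>x y. x \<in> set xs \<Longrightarrow> y \<in> set xs \<Longrightarrow> x * y = y * x"
    and "\<And>x. x \<in> set xs \<Longrightarrow> x * x = x"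
    and "a \<in> set xs" "b \<in> set xs" "a * b = 0"
  shows "prod_list xs = 0"
proof -
  have "prod_list xs = a * (b * prod_list xs)"
    using prod_list_absorb[OF assms(1,2)] assms(3,4) by simp
  then show ?thesis
    using assms(5) by (simp flip: mult.assoc)
qed

lemma prod_list_in_mult_closed:
  fixes xs :: "'a::monoid_mult list"
  assumes "xs \<noteq> []" "set xs \<subseteq> A" "\<And>x y. x \<in> A \<Longrightarrow> y \<in> A \<Longrightarrow> x * y \<in> A"
  shows "prod_list xs \<in> A"
  using assms by (induction xs rule: list_nonempty_induct) auto

lemma prod_list_map_sum:
  fixes f :: "'b \<Rightarrow> 'c \<Rightarrow> 'a::semiring_1"
  assumes "distinct xs"
  shows "prod_list (map (\<lambda>i. \<Sum>a\<in>A. f i a) xs)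
    = (\<Sum>g\<in>set xs \<rightarrow>\<^sub>E A. prod_list (map (\<lambda>i. f i (g i)) xs))"
  using assms
proof (induction xs)
  case (Cons x xs)
  let ?B = "set xs \<rightarrow>\<^sub>E A"
  have x_notin: "x \<notin> set xs"
    using Cons.prems by simp
  have upd: "prod_list (map (\<lambda>i. f i (if i = x then a else g i)) xs) = prod_list (map (\<lambda>i. f i (g i)) xs)"
    for g a
    using x_notin by (intro arg_cong[of _ _ prod_list] map_cong) auto
  have "(\<Sum>g\<in>set (x # xs) \<rightarrow>\<^sub>E A. prod_list (map (\<lambda>i. f i (g i)) (x # xs)))
      = (\<Sum>(a, g)\<in>A \<times> ?B. f x a * prod_list (map (\<lambda>i. f i (g i)) xs))"
    unfolding set_simps PiE_insert_eq using x_notin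
    by (subst sum.reindex[OF inj_combinator]) (simp_all add: case_prod_beta upd)
  also have "\<dots> = (\<Sum>a\<in>A. f x a) * (\<Sum>g\<in>?B. prod_list (map (\<lambda>i. f i (g i)) xs))"
    by (simp add: sum_product sum.cartesian_product)
  finally show ?case
    using Cons by simp
qed simp

lemma bij_betw_restrict_permutes:
  assumes "finite S"
  shows "bij_betw (\<lambda>p. restrict p S) {p. p permutes S} {g \<in> S \<rightarrow>\<^sub>E S. inj_on g S}"
proof (rule bij_betw_byWitness[where f' = "\<lambda>g. restrict_id g S"])
  show "\<forall>p\<in>{p. p permutes S}. restrict_id (restrict p S) S = p"
    by (simp add: fun_eq_iff restrict_id_def permutes_not_in)
  show "\<forall>g\<in>{g \<in> S \<rightarrow>\<^sub>E S. inj_on g S}. restrict (restrict_id g S) S = g"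
    using PiE_arb by (fastforce simp: fun_eq_iff)
  show "(\<lambda>p. restrict p S) ` {p. p permutes S} \<subseteq> {g \<in> S \<rightarrow>\<^sub>E S. inj_on g S}"
  proof (rule image_subsetI)
    fix p assume "p \<in> {p. p permutes S}"
    then have "p permutes S" by simp
    moreover have "inj_on (restrict p S) S \<longleftrightarrow> inj_on p S"
      by (rule inj_on_cong) simp
    ultimately show "restrict p S \<in> {g \<in> S \<rightarrow>\<^sub>E S. inj_on g S}"
      by (simp add: permutes_in_image permutes_inj_on)
  qed
  show "(\<lambda>g. restrict_id g S) ` {g \<in> S \<rightarrow>\<^sub>E S. inj_on g S} \<subseteq> {p. p permutes S}"
  proof clarify
    fix g assume "g \<in> S \<rightarrow>\<^sub>E S" "inj_on g S"
    then have "bij_betw g S S"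
      using assms endo_inj_surj[of S g] by (auto simp: bij_betw_def)
    then show "restrict_id g S permutes S"
      by (rule permutes_restrict_id)
  qed
qed

lemma scC_1 [simp]: "scC iu 1 x = x"
  by (simp add: scC_def)

locale cstar_algebra =
  fixes st :: "'a::{real_normed_algebra_1,banach} \<Rightarrow> 'a" and iu :: 'a
  assumes unital_cstar_algebra: "unital_cstar_algebra st iu"
begin

lemma st_st [simp]: "st (st x) = x"
  and st_add [simp]: "st (x + y) = st x + st y"
  and st_mult [simp]: "st (x * y) = st y * st x"
  and iu_commute: "iu * x = x * iu"
  and norm_st_mult_self: "norm (st x * x) = (norm x)\<^sup>2"
  using unital_cstar_algebra unfolding unital_cstar_algebra_def by blast+

lemma st_0 [simp]: "st 0 = 0"
  using st_add[of 0 0] by simp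

lemma st_minus [simp]: "st (- x) = - st x"
  using st_add[of x "- x"] by (simp add: minus_unique)

lemma st_diff [simp]: "st (x - y) = st x - st y"
  using st_add[of x "- y"] by simp

lemma st_1 [simp]: "st 1 = 1"
  using st_mult[of 1 "st 1"] by simp

lemma st_sum: "st (sum f A) = (\<Sum>x\<in>A. st (f x))"
  by (induct A rule: infinite_finite_induct) auto

lemma scC_mult_left [simp]: "scC iu c x * y = scC iu c (x * y)"
  by (simp add: scC_def algebra_simps)

lemma scC_mult_right [simp]: "x * scC iu c y = scC iu c (x * y)"
  by (simp add: scC_def distrib_left flip: mult.assoc) (simp add: mult.assoc iu_commute)

lemma scC_0 [simp]: "scC iu c 0 = 0"
  by (simp add: scC_def)

lemma st_prod_list_commuting:
  assumes "\<And>x y. x \<in> set xs \<Longrightarrow> y \<in> set xs \<Longrightarrow> x * y = y * x"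
    and "\<And>x. x \<in> set xs \<Longrightarrow> st x = x"
  shows "st (prod_list xs) = prod_list xs"
  using assms
proof (induction xs)
  case (Cons y ys)
  then have "y * prod_list ys = prod_list ys * y"
    by (intro prod_list_commute) simp
  with Cons show ?case by simp
qed simp

lemma is_projection_norm_le_1:
  assumes "is_projection st p"
  shows "norm p \<le> 1"
proof -
  have "norm p = (norm p)\<^sup>2"
    using assms norm_st_mult_self[of p] by (simp add: is_projection_def)
  then have "norm p = 0 \<or> norm p = 1"
    by (simp add: power2_eq_square)
  then show ?thesis by auto
qed

lemma is_projection_1_minus: "is_projection st p \<Longrightarrow> is_projection st (1 - p)"
  by (auto simp: is_projection_def algebra_simps)

lemma is_projection_sum:
  assumes "\<And>k. k \<in> K \<Longrightarrow> is_projection st (e k)"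
    and "\<And>k l. k \<in> K \<Longrightarrow> l \<in> K \<Longrightarrow> k \<noteq> l \<Longrightarrow> e k * e l = 0"
  shows "is_projection st (sum e K)"
proof (cases "finite K")
  case True
  have "e k * sum e K = e k" if "k \<in> K" for k
  proof -
    have "e k * sum e K = (\<Sum>l\<in>K. e k * e l)"
      by (simp add: sum_distrib_left)
    also have "\<dots> = e k * e k"
      using True assms(2) that by (intro sum_eq_single) auto
    finally show ?thesis
      using assms(1)[OF that] by (simp add: is_projection_def)
  qed
  then show ?thesis
    using assms(1) by (simp add: is_projection_def st_sum sum_distrib_right)
qed (simp add: is_projection_def)

text \<open>With m further terms, q j0 * (m + q j0) = (m + 1) q j0, while m + q j0 is the sum of the
  projections 1 - q j over j \<noteq> j0 and so has norm at most m.\<close>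

lemma projections_sum_eq_0_imp_eq_0:
  assumes "finite S" and proj: "\<And>j. j \<in> S \<Longrightarrow> is_projection st (q j)"
    and sum_0: "sum q S = 0" and "j0 \<in> S"
  shows "q j0 = 0"
proof -
  define m where "m = card (S - {j0})"
  have "sum q (S - {j0}) = - q j0"
    using sum.remove[OF assms(1,4), of q] sum_0 by (simp add: add_eq_0_iff)
  then have complements_sum: "(\<Sum>j\<in>S - {j0}. 1 - q j) = of_nat m + q j0"
    by (simp add: sum_subtractf m_def)
  have "norm (\<Sum>j\<in>S - {j0}. 1 - q j) \<le> (\<Sum>j\<in>S - {j0}. norm (1 - q j))"
    by (rule norm_sum)
  also have "\<dots> \<le> real m"
    using sum_mono[of "S - {j0}" "\<lambda>j. norm (1 - q j)" "\<lambda>_. 1"]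
    by (simp add: m_def proj is_projection_norm_le_1 is_projection_1_minus)
  finally have norm_le: "norm (of_nat m + q j0 :: 'a) \<le> real m"
    by (simp only: complements_sum)
  have "q j0 * q j0 = q j0"
    using proj[OF \<open>j0 \<in> S\<close>] by (simp add: is_projection_def)
  then have "q j0 * (of_nat m + q j0) = real (m + 1) *\<^sub>R q j0"
    by (simp add: distrib_left distrib_right mult_of_nat_commute scaleR_conv_of_real)
  then have "real (m + 1) * norm (q j0) = norm (q j0 * (of_nat m + q j0))"
    by simp
  also have "\<dots> \<le> norm (q j0) * norm (of_nat m + q j0 :: 'a)"
    by (rule norm_mult_ineq)
  also have "\<dots> \<le> norm (q j0) * real m"
    using norm_le by (simp add: mult_left_mono)
  finally show ?thesis
    by (simp add: algebra_simps)
qed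

lemma projection_matrix_row_sum_eq_1:
  assumes "finite I"
    and proj: "\<And>i k. i \<in> I \<Longrightarrow> k \<in> I \<Longrightarrow> is_projection st (E i k)"
    and row_orthogonal: "\<And>i k l. i \<in> I \<Longrightarrow> k \<in> I \<Longrightarrow> l \<in> I \<Longrightarrow> k \<noteq> l \<Longrightarrow> E i k * E i l = 0"
    and column_sum: "\<And>k. k \<in> I \<Longrightarrow> (\<Sum>i\<in>I. E i k) = 1"
    and "i \<in> I"
  shows "(\<Sum>k\<in>I. E i k) = 1"
proof -
  have "(\<Sum>i\<in>I. 1 - (\<Sum>k\<in>I. E i k)) = (\<Sum>i\<in>I. 1) - (\<Sum>i\<in>I. \<Sum>k\<in>I. E i k)"
    by (rule sum_subtractf)
  also have "\<dots> = (\<Sum>i\<in>I. 1) - (\<Sum>k\<in>I. \<Sum>i\<in>I. E i k)"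
    by (subst sum.swap) (rule refl)
  also have "\<dots> = 0"
    by (simp add: column_sum)
  finally have complements_sum: "(\<Sum>j\<in>I. 1 - (\<Sum>k\<in>I. E j k)) = 0" .
  have "is_projection st (1 - (\<Sum>k\<in>I. E j k))" if "j \<in> I" for j
    using that proj row_orthogonal by (intro is_projection_1_minus is_projection_sum)
  from projections_sum_eq_0_imp_eq_0[OF \<open>finite I\<close> this complements_sum \<open>i \<in> I\<close>]
  have "1 - (\<Sum>k\<in>I. E i k) = 0" .
  then show ?thesis by simp
qed

lemma cstar_subalgebra_commutant:
  assumes "st p = p"
  shows "cstar_subalgebra st iu {x. p * x = x * p}"
  unfolding cstar_subalgebra_def
proof (intro conjI ballI allI)
  show "closed {x. p * x = x * p}"
    by (intro closed_Collect_eq continuous_intros)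
  fix x y assume "x \<in> {x. p * x = x * p}" "y \<in> {x. p * x = x * p}"
  then have px: "p * x = x * p" and py: "p * y = y * p" by simp_all
  show "x + y \<in> {x. p * x = x * p}"
    by (simp add: px py algebra_simps)
  show "x * y \<in> {x. p * x = x * p}"
    by (simp add: px py flip: mult.assoc) (simp add: py mult.assoc)
  show "st x \<in> {x. p * x = x * p}"
    using arg_cong[OF px, of st] by (simp add: assms)
  show "scC iu c x \<in> {x. p * x = x * p}" for c
    by (simp add: px)
qed simp

lemma central_in_cstar_generated:
  assumes "st p = p" and "p \<in> cstar_generated st iu S" and "\<And>s. s \<in> S \<Longrightarrow> p * s = s * p"
  shows "central_in p (cstar_generated st iu S)"
proof -
  have "cstar_generated st iu S \<subseteq> {x. p * x = x * p}"
    using assms(3) by (intro cstar_generated_least cstar_subalgebra_commutant assms(1)) auto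
  then show ?thesis
    using assms(2) by (auto simp: central_in_def)
qed

end

locale twisted_permutation_relations = cstar_algebra st iu
  for st :: "'a::{real_normed_algebra_1,banach} \<Rightarrow> 'a" and iu :: 'a +
  fixes I :: "nat set" and \<theta> :: "nat \<Rightarrow> nat \<Rightarrow> real" and U :: "nat \<Rightarrow> nat \<Rightarrow> 'a"
  assumes finite_I: "finite I"
    and skew: "\<And>i j. i \<in> I \<Longrightarrow> j \<in> I \<Longrightarrow> \<theta> j i = - \<theta> i j"
    and R1: "\<And>i j k l. i \<in> I \<Longrightarrow> j \<in> I \<Longrightarrow> k \<in> I \<Longrightarrow> l \<in> I \<Longrightarrow>
      U i k * U j l + scC iu (omega \<theta> j i) (U j k * U i l)
      = scC iu (omega \<theta> k l) (U i l * U j k) + scC iu (omega \<theta> j i * omega \<theta> k l) (U j l * U i k)"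
    and R2: "\<And>k l. k \<in> I \<Longrightarrow> l \<in> I \<Longrightarrow> (\<Sum>i\<in>I. U i k * st (U i l)) = (if k = l then 1 else 0)"
    and R3: "\<And>k l. k \<in> I \<Longrightarrow> l \<in> I \<Longrightarrow> (\<Sum>i\<in>I. st (U i l) * U i k) = (if k = l then 1 else 0)"
    and R4: "\<And>i j k. i \<in> I \<Longrightarrow> j \<in> I \<Longrightarrow> k \<in> I \<Longrightarrow> i \<noteq> j \<Longrightarrow> U j k * st (U i k) = 0"
    and R5: "\<And>i j k. i \<in> I \<Longrightarrow> j \<in> I \<Longrightarrow> k \<in> I \<Longrightarrow> i \<noteq> j \<Longrightarrow> st (U i k) * U j k = 0"
begin

abbreviation P :: "nat \<Rightarrow> nat \<Rightarrow> 'a" where "P i k \<equiv> st (U i k) * U i k"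
abbreviation Q :: "nat \<Rightarrow> nat \<Rightarrow> 'a" where "Q i k \<equiv> U i k * st (U i k)"

lemma U_partial_isometry:
  assumes "i \<in> I" "k \<in> I"
  shows "U i k * st (U i k) * U i k = U i k"
proof -
  have "U i k = U i k * (\<Sum>j\<in>I. st (U j k) * U j k)"
    using R3[OF assms(2,2)] by simp
  also have "\<dots> = (\<Sum>j\<in>I. U i k * st (U j k) * U j k)"
    by (simp add: sum_distrib_left mult.assoc)
  also have "\<dots> = U i k * st (U i k) * U i k"
    using R4 assms by (intro sum_eq_single finite_I) auto
  finally show ?thesis ..
qed

lemma adj_U_partial_isometry:
  "i \<in> I \<Longrightarrow> k \<in> I \<Longrightarrow> st (U i k) * U i k * st (U i k) = st (U i k)"
  using arg_cong[where f = st, OF U_partial_isometry] by (simp add: mult.assoc)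

lemma is_projection_P: "i \<in> I \<Longrightarrow> k \<in> I \<Longrightarrow> is_projection st (P i k)"
  using U_partial_isometry by (simp add: is_projection_def mult.assoc)

lemma is_projection_Q: "i \<in> I \<Longrightarrow> k \<in> I \<Longrightarrow> is_projection st (Q i k)"
  using adj_U_partial_isometry by (simp add: is_projection_def mult.assoc)

lemma P_mult_adj_U_same_row:
  assumes "i \<in> I" "k \<in> I" "l \<in> I" "k \<noteq> l"
  shows "P i k * st (U i l) = 0"
proof -
  have "0 = st (U i k) * (\<Sum>j\<in>I. U j k * st (U j l))"
    using R2[OF assms(2,3)] assms(4) by simp
  also have "\<dots> = (\<Sum>j\<in>I. st (U i k) * U j k * st (U j l))"
    by (simp add: sum_distrib_left mult.assoc)
  also have "\<dots> = P i k * st (U i l)"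
    using R5 assms by (intro sum_eq_single finite_I) auto
  finally show ?thesis ..
qed

lemma U_mult_P_same_row:
  "i \<in> I \<Longrightarrow> k \<in> I \<Longrightarrow> l \<in> I \<Longrightarrow> k \<noteq> l \<Longrightarrow> U i l * P i k = 0"
  using arg_cong[where f = st, OF P_mult_adj_U_same_row] by (simp add: mult.assoc)

lemma adj_U_mult_U_same_row:
  assumes "i \<in> I" "k \<in> I" "l \<in> I" "k \<noteq> l"
  shows "st (U i l) * U i k = 0"
proof -
  have "0 = U i l * (\<Sum>j\<in>I. st (U j l) * U j k)"
    using R3[OF assms(2,3)] assms(4) by simp
  also have "\<dots> = (\<Sum>j\<in>I. U i l * st (U j l) * U j k)"
    by (simp add: sum_distrib_left mult.assoc)
  also have "\<dots> = Q i l * U i k"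
    using R4 assms by (intro sum_eq_single finite_I) auto
  finally have "st (U i l) * (Q i l * U i k) = 0"
    by simp
  then show ?thesis
    using adj_U_partial_isometry[OF assms(1,3)] by (simp flip: mult.assoc)
qed

lemma row_sum_P: "i \<in> I \<Longrightarrow> (\<Sum>k\<in>I. P i k) = 1"
proof (rule projection_matrix_row_sum_eq_1[OF finite_I])
  show "P i k * P i l = 0" if "i \<in> I" "k \<in> I" "l \<in> I" "k \<noteq> l" for i k l
    using U_mult_P_same_row[of i l k] that by (simp add: mult.assoc)
qed (simp_all add: is_projection_P R3)

lemma row_sum_Q: "i \<in> I \<Longrightarrow> (\<Sum>k\<in>I. Q i k) = 1"
proof (rule projection_matrix_row_sum_eq_1[OF finite_I])
  show "Q i k * Q i l = 0" if "i \<in> I" "k \<in> I" "l \<in> I" "k \<noteq> l" for i k l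
  proof -
    have "Q i k * Q i l = U i k * (st (U i k) * U i l) * st (U i l)"
      by (simp add: mult.assoc)
    then show ?thesis
      using adj_U_mult_U_same_row[of i l k] that by simp
  qed
qed (simp_all add: is_projection_Q R2)

lemma omega_diag: "i \<in> I \<Longrightarrow> omega \<theta> i i = 1"
  using skew[of i i] by (simp add: omega_def)

lemma U_same_row_twisted_commute:
  assumes "i \<in> I" "k \<in> I" "l \<in> I"
  shows "U i k * U i l = scC iu (omega \<theta> k l) (U i l * U i k)"
proof -
  have "(2::real) *\<^sub>R (U i k * U i l) = 2 *\<^sub>R scC iu (omega \<theta> k l) (U i l * U i k)"
    using R1[OF assms(1,1,2,3)] omega_diag[OF assms(1)] by (simp add: scaleR_2)
  then show ?thesis
    by simp
qed

lemma P_mult_U_same_row: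
  assumes "i \<in> I" "k \<in> I" "l \<in> I" "k \<noteq> l"
  shows "P i k * U i l = 0"
proof -
  have "P i k * U i l = scC iu (omega \<theta> k l) (st (U i k) * U i l * U i k)"
    using U_same_row_twisted_commute[OF assms(1-3)] by (simp add: mult.assoc)
  then show ?thesis
    using adj_U_mult_U_same_row[OF assms(1,3,2)] assms(4) by simp
qed

lemma P_mult_U_self:
  assumes ik: "i \<in> I" "k \<in> I"
  shows "P i k * U i k = U i k"
proof -
  have "U i k = (\<Sum>l\<in>I. P i l) * U i k"
    using row_sum_P[OF ik(1)] by simp
  also have "\<dots> = (\<Sum>l\<in>I. P i l * U i k)"
    by (simp add: sum_distrib_right)
  also have "\<dots> = P i k * U i k"
    using P_mult_U_same_row ik by (intro sum_eq_single finite_I) auto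
  finally show ?thesis ..
qed

lemma U_mult_P_self: "i \<in> I \<Longrightarrow> k \<in> I \<Longrightarrow> U i k * P i k = U i k"
  using U_partial_isometry by (simp add: mult.assoc)

lemma U_mult_U_same_row:
  assumes "i \<in> I" "k \<in> I" "l \<in> I" "k \<noteq> l"
  shows "U i k * U i l = 0"
proof -
  have "U i k * U i l = U i k * (P i k * U i l)"
    using U_mult_P_self[OF assms(1,2)] by (simp flip: mult.assoc)
  then show ?thesis
    using P_mult_U_same_row[OF assms] by simp
qed

lemma U_mult_Q_self:
  assumes ik: "i \<in> I" "k \<in> I"
  shows "U i k * Q i k = U i k"
proof -
  have "U i k = U i k * (\<Sum>l\<in>I. Q i l)"
    using row_sum_Q[OF ik(1)] by simp
  also have "\<dots> = (\<Sum>l\<in>I. U i k * U i l * st (U i l))"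
    by (simp add: sum_distrib_left mult.assoc)
  also have "\<dots> = U i k * U i k * st (U i k)"
    using U_mult_U_same_row ik by (intro sum_eq_single finite_I) auto
  finally show ?thesis
    by (simp add: mult.assoc)
qed

lemma P_eq_Q:
  assumes "i \<in> I" "k \<in> I"
  shows "P i k = Q i k"
proof -
  have "P i k = st (U i k) * (U i k * Q i k)"
    using U_mult_Q_self[OF assms] by simp
  also have "\<dots> = (P i k * U i k) * st (U i k)"
    by (simp add: mult.assoc)
  also have "\<dots> = Q i k"
    using P_mult_U_self[OF assms] by simp
  finally show ?thesis .
qed

lemma P_mult_U_same_column:
  assumes "i \<in> I" "j \<in> I" "k \<in> I" "i \<noteq> j"
  shows "P i k * U j k = 0"
  using P_eq_Q[OF assms(1,3)] R5[OF assms] by (simp add: mult.assoc)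

lemma U_mult_P_same_column:
  "i \<in> I \<Longrightarrow> j \<in> I \<Longrightarrow> k \<in> I \<Longrightarrow> i \<noteq> j \<Longrightarrow> U j k * P i k = 0"
  using R4 by (simp flip: mult.assoc)

lemma P_mult_P_same_column:
  assumes "i \<in> I" "j \<in> I" "k \<in> I" "i \<noteq> j"
  shows "P i k * P j k = 0"
proof -
  have "P i k * P j k = st (U i k) * (U i k * st (U j k)) * U j k"
    by (simp add: mult.assoc)
  then show ?thesis
    using R4[of j i k] assms by simp
qed

text \<open>Multiplying (R1) by P i k on the left, resp. on the right, kills all terms but U i k * U j l
  and U j l * U i k; together this exhibits X = U i k * U j l as P i k * X * P i k.\<close>

lemma P_U_P_eq_P_U:
  assumes "i \<in> I" "j \<in> I" "k \<in> I" "l \<in> I" "i \<noteq> j" "k \<noteq> l"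
  shows "P i k * U j l * P i k = P i k * U j l"
proof -
  define c where "c = omega \<theta> j i * omega \<theta> k l"
  define X where "X = U i k * U j l"
  note R = R1[OF assms(1-4), folded c_def X_def]
  have "P i k * X = X"
    using P_mult_U_self[OF assms(1,3)] by (simp add: X_def flip: mult.assoc)
  moreover have "P i k * X = scC iu c (P i k * U j l * U i k)"
    using arg_cong[where f = "(*) (P i k)", OF R] assms
      P_mult_U_same_column[OF assms(1,2,3)] P_mult_U_same_row[OF assms(1,3,4)]
    by (simp add: distrib_left X_def flip: mult.assoc)
  ultimately have X_left: "X = scC iu c (P i k * U j l * U i k)"
    by simp
  have "X * P i k = scC iu c (U j l * U i k)"
    using arg_cong[where f = "\<lambda>x. x * P i k", OF R] assms U_mult_P_self[OF assms(1,3)]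
      U_mult_P_same_column[OF assms(1,2,3)] U_mult_P_same_row[OF assms(1,3,4)]
    by (simp add: distrib_right X_def mult.assoc)
  then have X_sandwich: "X = P i k * (X * P i k)"
    using X_left by (simp add: mult.assoc)
  have "X * P i k = P i k * X * (P i k * P i k)"
    by (subst X_sandwich) (simp add: mult.assoc)
  also have "\<dots> = X"
    using is_projection_P[OF assms(1,3)] X_sandwich by (simp add: is_projection_def mult.assoc)
  finally have "X * P i k = X" .
  then show ?thesis
    by (simp add: X_def mult.assoc)
qed

lemma U_mult_P_eq_P_U_P:
  assumes "i \<in> I" "j \<in> I" "k \<in> I" "l \<in> I" "i \<noteq> j" "k \<noteq> l"
  shows "U j l * P i k = P i k * U j l * P i k"
proof -
  have "U j l * P i k = (\<Sum>i'\<in>I. P i' k) * (U j l * P i k)"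
    using R3[OF assms(3,3)] by simp
  also have "\<dots> = (\<Sum>i'\<in>I. P i' k * U j l * P i k)"
    by (simp add: sum_distrib_right mult.assoc)
  also have "\<dots> = P i k * U j l * P i k"
  proof (intro sum_eq_single finite_I assms(1))
    fix i' assume i': "i' \<in> I" "i' \<noteq> i"
    show "P i' k * U j l * P i k = 0"
    proof (cases "i' = j")
      case True
      then show ?thesis
        using P_mult_U_same_row[of j k l] assms by simp
    next
      case False
      have "P i' k * U j l * P i k = P i' k * U j l * P i' k * P i k"
        using P_U_P_eq_P_U[of i' j k l] assms i' False by simp
      also have "\<dots> = P i' k * U j l * (P i' k * P i k)"
        by (simp add: mult.assoc)
      finally show ?thesis
        using P_mult_P_same_column[of i' i k] assms i' by simp
    qed
  qed
  finally show ?thesis .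
qed

lemma P_commute_U:
  assumes "i \<in> I" "j \<in> I" "k \<in> I" "l \<in> I"
  shows "P i k * U j l = U j l * P i k"
proof (cases "i = j"; cases "k = l")
  assume "i = j" "k = l"
  then show ?thesis
    using P_mult_U_self U_mult_P_self assms by simp
next
  assume "i = j" "k \<noteq> l"
  then show ?thesis
    using P_mult_U_same_row U_mult_P_same_row assms by simp
next
  assume "i \<noteq> j" "k = l"
  then show ?thesis
    using P_mult_U_same_column U_mult_P_same_column assms by simp
next
  assume "i \<noteq> j" "k \<noteq> l"
  then show ?thesis
    using P_U_P_eq_P_U U_mult_P_eq_P_U_P assms by simp
qed

lemma P_commute_adj_U:
  "i \<in> I \<Longrightarrow> j \<in> I \<Longrightarrow> k \<in> I \<Longrightarrow> l \<in> I \<Longrightarrow> P i k * st (U j l) = st (U j l) * P i k"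
  using arg_cong[where f = st, OF P_commute_U] by (simp add: mult.assoc)

lemma P_commute_P:
  assumes "i \<in> I" "j \<in> I" "k \<in> I" "l \<in> I"
  shows "P i k * P j l = P j l * P i k"
proof -
  have "P i k * P j l = st (U j l) * (P i k * U j l)"
    using P_commute_adj_U[OF assms] by (simp flip: mult.assoc)
  also have "\<dots> = P j l * P i k"
    using P_commute_U[OF assms] by (simp add: mult.assoc)
  finally show ?thesis .
qed

lemma P_factors:
  assumes "set xs \<subseteq> I" "g ` set xs \<subseteq> I" "x \<in> set (map (\<lambda>i. P i (g i)) xs)"
  shows P_factors_commute: "y \<in> set (map (\<lambda>i. P i (g i)) xs) \<Longrightarrow> x * y = y * x"
    and P_factors_self_adjoint: "st x = x"
    and P_factors_idem: "x * x = x"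
    and P_factors_commute_U: "j \<in> I \<Longrightarrow> l \<in> I \<Longrightarrow> U j l * x = x * U j l"
proof -
  obtain i where i: "i \<in> set xs" "x = P i (g i)"
    using assms(3) by auto
  then have "i \<in> I" "g i \<in> I"
    using assms(1,2) by auto
  then show "st x = x" "x * x = x"
    using is_projection_P i(2) by (simp_all add: is_projection_def)
  show "U j l * x = x * U j l" if "j \<in> I" "l \<in> I"
    using P_commute_U \<open>i \<in> I\<close> \<open>g i \<in> I\<close> that i(2) by simp
  show "x * y = y * x" if y: "y \<in> set (map (\<lambda>i. P i (g i)) xs)"
  proof -
    obtain j where j: "j \<in> set xs" "y = P j (g j)"
      using y by auto
    then have "j \<in> I" "g j \<in> I"
      using assms(1,2) by auto
    then show ?thesis
      using P_commute_P[OF \<open>i \<in> I\<close> _ \<open>g i \<in> I\<close>] i(2) j(2) by simp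
  qed
qed

lemma prod_P_projection_central:
  assumes "xs \<noteq> []" "set xs \<subseteq> I" "g ` set xs \<subseteq> I"
  defines "p \<equiv> prod_list (map (\<lambda>i. P i (g i)) xs)"
  shows "is_projection st p \<and> central_in p (cstar_generated st iu {U i k | i k. i \<in> I \<and> k \<in> I})"
proof -
  let ?G = "{U i k | i k. i \<in> I \<and> k \<in> I}"
  let ?ps = "map (\<lambda>i. P i (g i)) xs"
  note factors = P_factors[OF assms(2,3)]
  have st_p: "st p = p"
    unfolding p_def by (rule st_prod_list_commuting) (rule factors; assumption)+
  have idem_p: "p * p = p"
    unfolding p_def by (rule prod_list_idem) (rule factors; assumption)+
  have U_in: "U i k \<in> cstar_generated st iu ?G" if "i \<in> I" "k \<in> I" for i k
    using that cstar_generated_superset[of ?G st iu] by blast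
  have "P i k \<in> cstar_generated st iu ?G" if "i \<in> I" "k \<in> I" for i k
    by (rule cstar_generated_mult[OF cstar_generated_st[OF U_in[OF that]] U_in[OF that]])
  then have "set ?ps \<subseteq> cstar_generated st iu ?G"
    using assms(2,3) by (auto simp: image_subset_iff)
  then have p_in: "p \<in> cstar_generated st iu ?G"
    unfolding p_def using assms(1) by (intro prod_list_in_mult_closed cstar_generated_mult) simp_all
  have p_commute: "p * u = u * p" if "u \<in> ?G" for u
  proof -
    have "u * x = x * u" if "x \<in> set ?ps" for x
      using \<open>u \<in> ?G\<close> factors(4)[OF that] by auto
    then show ?thesis
      unfolding p_def by (rule prod_list_commute[symmetric])
  qed
  show ?thesis
    using st_p idem_p central_in_cstar_generated[OF st_p p_in p_commute]
    by (simp add: is_projection_def)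
qed

lemma sum_prod_P_functions:
  assumes "distinct xs" "set xs = I"
  shows "(\<Sum>g\<in>I \<rightarrow>\<^sub>E I. prod_list (map (\<lambda>i. P i (g i)) xs)) = 1"
proof -
  have "(\<Sum>g\<in>I \<rightarrow>\<^sub>E I. prod_list (map (\<lambda>i. P i (g i)) xs)) = prod_list (map (\<lambda>i. \<Sum>k\<in>I. P i k) xs)"
    using prod_list_map_sum[OF assms(1), of "\<lambda>i k. P i k" I] assms(2) by simp
  also have "map (\<lambda>i. \<Sum>k\<in>I. P i k) xs = map (\<lambda>_. 1) xs"
    using assms(2) row_sum_P by (intro map_cong) auto
  finally show ?thesis
    by (simp add: map_replicate_const)
qed

lemma prod_P_eq_0_if_not_inj:
  assumes "set xs = I" "g \<in> I \<rightarrow>\<^sub>E I" "\<not> inj_on g I"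
  shows "prod_list (map (\<lambda>i. P i (g i)) xs) = 0"
proof -
  obtain i j where ij: "i \<in> I" "j \<in> I" "i \<noteq> j" "g i = g j"
    using assms(3) unfolding inj_on_def by blast
  have "g ` set xs \<subseteq> I"
    using assms(1,2) by auto
  note factors = P_factors[OF equalityD1[OF assms(1)] this]
  show ?thesis
  proof (rule prod_list_eq_0)
    show "P i (g i) \<in> set (map (\<lambda>i. P i (g i)) xs)" "P j (g j) \<in> set (map (\<lambda>i. P i (g i)) xs)"
      using ij(1,2) assms(1) by auto
    show "P i (g i) * P j (g j) = 0"
      using P_mult_P_same_column ij assms(2) by auto
  qed (rule factors; assumption)+
qed

lemma sum_prod_P_permutations:
  assumes "distinct xs" "set xs = I"
  shows "(\<Sum>\<sigma> | \<sigma> permutes I. prod_list (map (\<lambda>i. P i (inv \<sigma> i)) xs)) = 1"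
proof -
  define T where "T g = prod_list (map (\<lambda>i. P i (g i)) xs)" for g
  have T_restrict: "T (restrict g I) = T g" for g
    unfolding T_def using assms(2) by (intro arg_cong[where f = prod_list] map_cong) auto
  have "(\<Sum>\<sigma> | \<sigma> permutes I. T (inv \<sigma>)) = (\<Sum>\<sigma> | \<sigma> permutes I. T \<sigma>)"
    by (rule sum_permutations_inverse[symmetric])
  also have "\<dots> = (\<Sum>g \<in> {g \<in> I \<rightarrow>\<^sub>E I. inj_on g I}. T g)"
    using sum.reindex_bij_betw[OF bij_betw_restrict_permutes[OF finite_I], of T]
    by (simp add: T_restrict)
  also have "\<dots> = (\<Sum>g\<in>I \<rightarrow>\<^sub>E I. T g)"
    using assms(2) finite_I
    by (intro sum.mono_neutral_left) (auto simp: T_def prod_P_eq_0_if_not_inj finite_PiE)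
  also have "\<dots> = 1"
    unfolding T_def using assms by (rule sum_prod_P_functions)
  finally show ?thesis
    by (simp add: T_def)
qed

end

theorem proposition3p19:
  fixes st :: "'a::{real_normed_algebra_1,banach} \<Rightarrow> 'a" and iu :: 'a
    and n :: nat and \<theta> :: "nat \<Rightarrow> nat \<Rightarrow> real" and U :: "nat \<Rightarrow> nat \<Rightarrow> 'a"
  assumes cstar: "unital_cstar_algebra st iu"
    and n2: "n \<ge> 2"
    and skew: "\<forall>i\<in>{1..n}. \<forall>j\<in>{1..n}. \<theta> j i = - \<theta> i j"
    and R1: "\<forall>i\<in>{1..n}. \<forall>j\<in>{1..n}. \<forall>k\<in>{1..n}. \<forall>l\<in>{1..n}.
       U i k * U j l + scC iu (omega \<theta> j i) (U j k * U i l)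
       = scC iu (omega \<theta> k l) (U i l * U j k) + scC iu (omega \<theta> j i * omega \<theta> k l) (U j l * U i k)"
    and R2: "\<forall>k\<in>{1..n}. \<forall>l\<in>{1..n}. (\<Sum>i=1..n. U i k * st (U i l)) = (if k = l then 1 else 0)"
    and R3: "\<forall>k\<in>{1..n}. \<forall>l\<in>{1..n}. (\<Sum>i=1..n. st (U i l) * U i k) = (if k = l then 1 else 0)"
    and R4: "\<forall>i\<in>{1..n}. \<forall>j\<in>{1..n}. \<forall>k\<in>{1..n}. i \<noteq> j \<longrightarrow> U j k * st (U i k) = 0"
    and R5: "\<forall>i\<in>{1..n}. \<forall>j\<in>{1..n}. \<forall>k\<in>{1..n}. i \<noteq> j \<longrightarrow> st (U i k) * U j k = 0"
  shows "(\<forall>\<sigma>. \<sigma> permutes {1..n} \<longrightarrow>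
            is_projection st (Psigma st U n \<sigma>) \<and>
            central_in (Psigma st U n \<sigma>)
              (cstar_generated st iu {U i k | i k. i \<in> {1..n} \<and> k \<in> {1..n}}))
         \<and> (\<Sum>\<sigma> | \<sigma> permutes {1..n}. Psigma st U n \<sigma>) = 1"
proof -
  interpret twisted_permutation_relations st iu "{1..n}" \<theta> U
    by unfold_locales (simp only: cstar finite_atLeastAtMost | use skew R1 R2 R3 R4 R5 in blast)+
  define xs where "xs = [1..<n+1]"
  have xs: "distinct xs" "set xs = {1..n}" "xs \<noteq> []"
    unfolding xs_def using n2 by (simp_all del: upt_Suc add: atLeastLessThanSuc_atLeastAtMost)
  have Psigma_eq: "Psigma st U n \<sigma> = prod_list (map (\<lambda>i. P i (inv \<sigma> i)) xs)" for \<sigma>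
    by (simp add: Psigma_def Pop_def xs_def)
  show ?thesis
  proof (intro conjI allI impI)
    fix \<sigma> assume "\<sigma> permutes {1..n}"
    then have "inv \<sigma> ` set xs \<subseteq> {1..n}"
      unfolding xs(2) by (simp add: permutes_inv permutes_image)
    from prod_P_projection_central[OF xs(3) equalityD1[OF xs(2)] this]
    show "is_projection st (Psigma st U n \<sigma>)"
      and "central_in (Psigma st U n \<sigma>) (cstar_generated st iu {U i k | i k. i \<in> {1..n} \<and> k \<in> {1..n}})"
      unfolding Psigma_eq by simp_all
  next
    show "(\<Sum>\<sigma> | \<sigma> permutes {1..n}. Psigma st U n \<sigma>) = 1"
      unfolding Psigma_eq using xs(1,2) by (rule sum_prod_P_permutations)
  qed
qed

end
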